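(* If $H$ is a breakable monoid, then $\mathcal{P}_{\mathrm{fin},1}(H)$ is UmF.
   Context: A monoid $H$ is breakable if $xy\in\{x,y\}$ for all $x,y\in H$. $\mathcal{P}_{\mathrm{fin},1}(H)$ denotes the set of non-empty finite subsets of $H$ containing $1_H$, a monoid under $XY=\{xy:x\in X,y\in Y\}$. In a monoid $M$: $x\mid_M y$ iff $y\in MxM$; $x,y$ are associated if each divides the other; proper divisor means divides but not associated. A unit-divisor divides $1_M$; otherwise it is a non-unit-divisor. An irreducible is a non-unit-divisor $a$ with $a\neq xy$ for all non-unit-divisors $x,y$ properly dividing $a$. A factorization of $x$ is a finite word over the irreducibles with product $x$. For words $\mathfrak a,\mathfrak b$, $\mathfrak a\sqsubseteq\mathfrak b$ means $\mathfrak a$ is, up to associatedness of letters, a subword (subsequence) of some permutation of $\mathfrak b$; equivalence means $\sqsubseteq$ both ways. A factorization $\mathfrak a$ of $x$ is minimal if no factorization $\mathfrak b$ of $x$ satisfies $\mathfrak b\sqsubseteq\mathfrak a\not\sqsubseteq\mathfrak b$. $M$ is UmF if every non-unit-divisor has a factorization and any two minimal factorizations of an element are equivalent. *)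

theory Defs
  imports "HOL-Algebra.Group" "HOL-Library.Multiset" "HOL-Library.Sublist"
begin

definition tdvd :: "('a, 'b) monoid_scheme \<Rightarrow> 'a \<Rightarrow> 'a \<Rightarrow> bool" where
  "tdvd M x y \<longleftrightarrow> x \<in> carrier M \<and> y \<in> carrier M \<and>
     (\<exists>u\<in>carrier M. \<exists>v\<in>carrier M. y = u \<otimes>\<^bsub>M\<^esub> x \<otimes>\<^bsub>M\<^esub> v)"

definition tassoc :: "('a, 'b) monoid_scheme \<Rightarrow> 'a \<Rightarrow> 'a \<Rightarrow> bool" where
  "tassoc M x y \<longleftrightarrow> tdvd M x y \<and> tdvd M y x"

definition proper_tdvd :: "('a, 'b) monoid_scheme \<Rightarrow> 'a \<Rightarrow> 'a \<Rightarrow> bool" where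
  "proper_tdvd M x y \<longleftrightarrow> tdvd M x y \<and> \<not> tassoc M x y"

definition unit_divisor :: "('a, 'b) monoid_scheme \<Rightarrow> 'a \<Rightarrow> bool" where
  "unit_divisor M x \<longleftrightarrow> tdvd M x \<one>\<^bsub>M\<^esub>"

definition non_unit_divisor :: "('a, 'b) monoid_scheme \<Rightarrow> 'a \<Rightarrow> bool" where
  "non_unit_divisor M x \<longleftrightarrow> x \<in> carrier M \<and> \<not> unit_divisor M x"

definition tirreducible :: "('a, 'b) monoid_scheme \<Rightarrow> 'a \<Rightarrow> bool" where
  "tirreducible M a \<longleftrightarrow> non_unit_divisor M a \<and>
     \<not> (\<exists>x y. non_unit_divisor M x \<and> non_unit_divisor M y \<and>
              proper_tdvd M x a \<and> proper_tdvd M y a \<and> a = x \<otimes>\<^bsub>M\<^esub> y)"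

definition word_prod :: "('a, 'b) monoid_scheme \<Rightarrow> 'a list \<Rightarrow> 'a" where
  "word_prod M xs = foldr (\<lambda>a b. a \<otimes>\<^bsub>M\<^esub> b) xs \<one>\<^bsub>M\<^esub>"

definition is_factorization :: "('a, 'b) monoid_scheme \<Rightarrow> 'a list \<Rightarrow> 'a \<Rightarrow> bool" where
  "is_factorization M xs x \<longleftrightarrow> (\<forall>a\<in>set xs. tirreducible M a) \<and> word_prod M xs = x"

definition word_le :: "('a, 'b) monoid_scheme \<Rightarrow> 'a list \<Rightarrow> 'a list \<Rightarrow> bool" where
  "word_le M as bs \<longleftrightarrow> (\<exists>bs'. mset bs' = mset bs \<and> list_emb (tassoc M) as bs')"

definition word_equiv :: "('a, 'b) monoid_scheme \<Rightarrow> 'a list \<Rightarrow> 'a list \<Rightarrow> bool" where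
  "word_equiv M as bs \<longleftrightarrow> word_le M as bs \<and> word_le M bs as"

definition minimal_factorization :: "('a, 'b) monoid_scheme \<Rightarrow> 'a list \<Rightarrow> 'a \<Rightarrow> bool" where
  "minimal_factorization M as x \<longleftrightarrow> is_factorization M as x \<and>
     \<not> (\<exists>bs. is_factorization M bs x \<and> word_le M bs as \<and> \<not> word_le M as bs)"

definition UmF :: "('a, 'b) monoid_scheme \<Rightarrow> bool" where
  "UmF M \<longleftrightarrow>
     (\<forall>x. non_unit_divisor M x \<longrightarrow> (\<exists>as. is_factorization M as x)) \<and>
     (\<forall>x\<in>carrier M. \<forall>as bs. minimal_factorization M as x \<and> minimal_factorization M bs x
        \<longrightarrow> word_equiv M as bs)"

definition breakable :: "('a, 'b) monoid_scheme \<Rightarrow> bool" where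
  "breakable H \<longleftrightarrow> monoid H \<and>
     (\<forall>x\<in>carrier H. \<forall>y\<in>carrier H. x \<otimes>\<^bsub>H\<^esub> y \<in> {x, y})"

definition Pfin1 :: "('a, 'b) monoid_scheme \<Rightarrow> 'a set monoid" where
  "Pfin1 H = \<lparr> carrier = {X. X \<subseteq> carrier H \<and> finite X \<and> X \<noteq> {} \<and> \<one>\<^bsub>H\<^esub> \<in> X},
               monoid.mult = (\<lambda>X Y. {x \<otimes>\<^bsub>H\<^esub> y | x y. x \<in> X \<and> y \<in> Y}),
               monoid.one = {\<one>\<^bsub>H\<^esub>} \<rparr>"

end

theory Submission
  imports Defs
begin

text \<open>Breakability makes the product of two sets containing \<open>1\<close> their union, so \<open>Pfin1 H\<close> is
  the semilattice of finite sets containing \<open>1\<close> under union: divisibility is inclusion,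
  associated elements are equal, the only unit-divisor is \<open>{1}\<close> and the irreducibles are the
  sets \<open>{1, a}\<close> with \<open>a \<noteq> 1\<close>. Every non-unit-divisor \<open>X\<close> is the union of the irreducibles
  below it, and a factorization of \<open>X\<close> must use each of them. A minimal factorization uses each
  of them exactly once, so any two are permutations of each other.\<close>

lemma mset_subset_eq_if_subseq: "subseq xs ys \<Longrightarrow> mset xs \<subseteq># mset ys"
  by (induction rule: list_emb.induct) (auto intro: subset_mset.order_trans)

lemma word_le_iff_subset_mset:
  assumes tassoc_iff_eq: "\<And>x y. tassoc M x y \<longleftrightarrow> x \<in> carrier M \<and> x = y"
    and as: "set as \<subseteq> carrier M"
  shows "word_le M as bs \<longleftrightarrow> mset as \<subseteq># mset bs"
proof
  assume "word_le M as bs"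
  then obtain bs' where bs': "mset bs' = mset bs" "list_emb (tassoc M) as bs'"
    unfolding word_le_def by blast
  have "subseq as bs'"
    using list_emb_mono[of "tassoc M" "(=)"] bs'(2) tassoc_iff_eq by blast
  then show "mset as \<subseteq># mset bs"
    using bs'(1) mset_subset_eq_if_subseq by metis
next
  assume sub: "mset as \<subseteq># mset bs"
  obtain ys where ys: "mset ys = mset bs - mset as"
    using ex_mset by blast
  have "mset (ys @ as) = mset bs"
    using ys sub by (simp add: subset_mset.diff_add)
  moreover have "list_emb (tassoc M) as (ys @ as)"
    using list_emb_refl[of as "tassoc M"] as tassoc_iff_eq by blast
  ultimately show "word_le M as bs"
    unfolding word_le_def by blast
qed

lemma carrier_Pfin1:
  "carrier (Pfin1 H) = {X. X \<subseteq> carrier H \<and> finite X \<and> X \<noteq> {} \<and> \<one>\<^bsub>H\<^esub> \<in> X}"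
  by (simp add: Pfin1_def)

lemma one_Pfin1: "\<one>\<^bsub>Pfin1 H\<^esub> = {\<one>\<^bsub>H\<^esub>}"
  by (simp add: Pfin1_def)

lemma Un_in_carrier_Pfin1:
  "X \<in> carrier (Pfin1 H) \<Longrightarrow> Y \<in> carrier (Pfin1 H) \<Longrightarrow> X \<union> Y \<in> carrier (Pfin1 H)"
  by (auto simp: carrier_Pfin1)

context
  fixes H :: "('a, 'b) monoid_scheme"
  assumes br: "breakable H"
begin

lemma one_in_carrier_Pfin1: "{\<one>\<^bsub>H\<^esub>} \<in> carrier (Pfin1 H)"
  using br by (auto simp: carrier_Pfin1 breakable_def monoid.one_closed)

lemma mult_Pfin1_eq_Un:
  assumes X: "X \<in> carrier (Pfin1 H)" and Y: "Y \<in> carrier (Pfin1 H)"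
  shows "X \<otimes>\<^bsub>Pfin1 H\<^esub> Y = X \<union> Y"
proof -
  have mult: "X \<otimes>\<^bsub>Pfin1 H\<^esub> Y = {x \<otimes>\<^bsub>H\<^esub> y | x y. x \<in> X \<and> y \<in> Y}"
    by (simp add: Pfin1_def)
  have sub: "X \<subseteq> carrier H" "Y \<subseteq> carrier H" and one: "\<one>\<^bsub>H\<^esub> \<in> X" "\<one>\<^bsub>H\<^esub> \<in> Y"
    using X Y by (auto simp: carrier_Pfin1)
  have "x \<otimes>\<^bsub>H\<^esub> y \<in> {x, y}" if "x \<in> X" "y \<in> Y" for x y
    using br sub that by (auto simp: breakable_def)
  then have "X \<otimes>\<^bsub>Pfin1 H\<^esub> Y \<subseteq> X \<union> Y"
    unfolding mult by fastforce
  moreover have "x \<in> X \<otimes>\<^bsub>Pfin1 H\<^esub> Y" if "x \<in> X" for x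
  proof -
    have "x = x \<otimes>\<^bsub>H\<^esub> \<one>\<^bsub>H\<^esub>"
      using br sub that by (auto simp: breakable_def monoid.r_one)
    with that one show ?thesis
      unfolding mult by blast
  qed
  moreover have "y \<in> X \<otimes>\<^bsub>Pfin1 H\<^esub> Y" if "y \<in> Y" for y
  proof -
    have "y = \<one>\<^bsub>H\<^esub> \<otimes>\<^bsub>H\<^esub> y"
      using br sub that by (auto simp: breakable_def monoid.l_one)
    with that one show ?thesis
      unfolding mult by blast
  qed
  ultimately show ?thesis
    by blast
qed

lemma tdvd_Pfin1_iff:
  "tdvd (Pfin1 H) X Y \<longleftrightarrow> X \<in> carrier (Pfin1 H) \<and> Y \<in> carrier (Pfin1 H) \<and> X \<subseteq> Y"
proof
  assume "tdvd (Pfin1 H) X Y"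
  then obtain U V where "X \<in> carrier (Pfin1 H)" "Y \<in> carrier (Pfin1 H)"
    "U \<in> carrier (Pfin1 H)" "V \<in> carrier (Pfin1 H)" "Y = U \<otimes>\<^bsub>Pfin1 H\<^esub> X \<otimes>\<^bsub>Pfin1 H\<^esub> V"
    unfolding tdvd_def by blast
  then show "X \<in> carrier (Pfin1 H) \<and> Y \<in> carrier (Pfin1 H) \<and> X \<subseteq> Y"
    by (auto simp: mult_Pfin1_eq_Un Un_in_carrier_Pfin1)
next
  assume XY: "X \<in> carrier (Pfin1 H) \<and> Y \<in> carrier (Pfin1 H) \<and> X \<subseteq> Y"
  then have "\<one>\<^bsub>H\<^esub> \<in> X"
    by (auto simp: carrier_Pfin1)
  with XY have "{\<one>\<^bsub>H\<^esub>} \<otimes>\<^bsub>Pfin1 H\<^esub> X = X" "X \<otimes>\<^bsub>Pfin1 H\<^esub> Y = Y"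
    by (auto simp: mult_Pfin1_eq_Un one_in_carrier_Pfin1)
  then have "Y = {\<one>\<^bsub>H\<^esub>} \<otimes>\<^bsub>Pfin1 H\<^esub> X \<otimes>\<^bsub>Pfin1 H\<^esub> Y"
    by simp
  with XY show "tdvd (Pfin1 H) X Y"
    unfolding tdvd_def using one_in_carrier_Pfin1 by blast
qed

lemma tassoc_Pfin1_iff: "tassoc (Pfin1 H) X Y \<longleftrightarrow> X \<in> carrier (Pfin1 H) \<and> X = Y"
  unfolding tassoc_def tdvd_Pfin1_iff by auto

lemma non_unit_divisor_Pfin1_iff:
  "non_unit_divisor (Pfin1 H) X \<longleftrightarrow> X \<in> carrier (Pfin1 H) \<and> X \<noteq> {\<one>\<^bsub>H\<^esub>}"
  unfolding non_unit_divisor_def unit_divisor_def tdvd_Pfin1_iff one_Pfin1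
  using one_in_carrier_Pfin1 by (auto simp: carrier_Pfin1)

lemma tirreducible_Pfin1_iff:
  "tirreducible (Pfin1 H) A \<longleftrightarrow> (\<exists>a\<in>carrier H. a \<noteq> \<one>\<^bsub>H\<^esub> \<and> A = {\<one>\<^bsub>H\<^esub>, a})"
proof
  assume irr: "tirreducible (Pfin1 H) A"
  then have A: "A \<in> carrier (Pfin1 H)" "A \<noteq> {\<one>\<^bsub>H\<^esub>}"
    unfolding tirreducible_def non_unit_divisor_Pfin1_iff by auto
  then have one: "\<one>\<^bsub>H\<^esub> \<in> A" and sub: "A \<subseteq> carrier H"
    by (auto simp: carrier_Pfin1)
  with A obtain a where a: "a \<in> A" "a \<noteq> \<one>\<^bsub>H\<^esub>"
    by blast
  show "\<exists>a\<in>carrier H. a \<noteq> \<one>\<^bsub>H\<^esub> \<and> A = {\<one>\<^bsub>H\<^esub>, a}"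
  proof (rule ccontr)
    assume "\<not> ?thesis"
    with one a sub obtain b where b: "b \<in> A" "b \<noteq> \<one>\<^bsub>H\<^esub>" "b \<noteq> a"
      by blast
    define X where "X = {\<one>\<^bsub>H\<^esub>, a}"
    define Y where "Y = A - {a}"
    have X: "X \<in> carrier (Pfin1 H)" and Y: "Y \<in> carrier (Pfin1 H)"
      using A a one unfolding X_def Y_def by (auto simp: carrier_Pfin1)
    have "non_unit_divisor (Pfin1 H) X" "non_unit_divisor (Pfin1 H) Y"
      using X Y a b unfolding non_unit_divisor_Pfin1_iff X_def Y_def by auto
    moreover have "proper_tdvd (Pfin1 H) X A" "proper_tdvd (Pfin1 H) Y A"
      unfolding proper_tdvd_def tassoc_Pfin1_iff tdvd_Pfin1_iff
      using A X Y one a b unfolding X_def Y_def by auto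
    moreover have "A = X \<otimes>\<^bsub>Pfin1 H\<^esub> Y"
      using mult_Pfin1_eq_Un[OF X Y] a one unfolding X_def Y_def by auto
    ultimately show False
      using irr unfolding tirreducible_def by blast
  qed
next
  assume "\<exists>a\<in>carrier H. a \<noteq> \<one>\<^bsub>H\<^esub> \<and> A = {\<one>\<^bsub>H\<^esub>, a}"
  then obtain a where a: "a \<in> carrier H" "a \<noteq> \<one>\<^bsub>H\<^esub>" "A = {\<one>\<^bsub>H\<^esub>, a}"
    by blast
  then have A: "A \<in> carrier (Pfin1 H)"
    using one_in_carrier_Pfin1 by (auto simp: carrier_Pfin1)
  have "X = A" if "X \<in> carrier (Pfin1 H)" "X \<subseteq> A" "X \<noteq> {\<one>\<^bsub>H\<^esub>}" for X
    using that a by (auto simp: carrier_Pfin1)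
  with A a show "tirreducible (Pfin1 H) A"
    unfolding tirreducible_def non_unit_divisor_Pfin1_iff proper_tdvd_def tassoc_Pfin1_iff
      tdvd_Pfin1_iff
    by blast
qed

lemma tirreducible_in_carrier_Pfin1: "tirreducible (Pfin1 H) A \<Longrightarrow> A \<in> carrier (Pfin1 H)"
  by (simp add: tirreducible_def non_unit_divisor_def)

lemma word_prod_Pfin1:
  "set xs \<subseteq> carrier (Pfin1 H) \<Longrightarrow> word_prod (Pfin1 H) xs = insert \<one>\<^bsub>H\<^esub> (\<Union> (set xs))"
proof (induction xs)
  case Nil
  then show ?case
    by (simp add: word_prod_def one_Pfin1)
next
  case (Cons A xs)
  then have "insert \<one>\<^bsub>H\<^esub> (\<Union> (set xs)) \<in> carrier (Pfin1 H)"
    using one_in_carrier_Pfin1 by (auto simp: carrier_Pfin1)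
  with Cons show ?case
    by (auto simp: word_prod_def mult_Pfin1_eq_Un)
qed

lemma word_le_Pfin1_iff:
  assumes "set as \<subseteq> carrier (Pfin1 H)"
  shows "word_le (Pfin1 H) as bs \<longleftrightarrow> mset as \<subseteq># mset bs"
  using tassoc_Pfin1_iff assms by (rule word_le_iff_subset_mset)

lemma set_factorization_Pfin1:
  assumes "is_factorization (Pfin1 H) as X"
  shows "set as = {A. tirreducible (Pfin1 H) A \<and> A \<subseteq> X}"
proof -
  have irr: "\<forall>A\<in>set as. tirreducible (Pfin1 H) A"
    using assms by (simp add: is_factorization_def)
  then have "set as \<subseteq> carrier (Pfin1 H)"
    using tirreducible_in_carrier_Pfin1 by blast
  then have X: "X = insert \<one>\<^bsub>H\<^esub> (\<Union> (set as))"
    using assms by (simp add: is_factorization_def word_prod_Pfin1)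
  have "A \<in> set as" if A: "tirreducible (Pfin1 H) A" "A \<subseteq> X" for A
  proof -
    from A(1) obtain a where a: "a \<noteq> \<one>\<^bsub>H\<^esub>" "A = {\<one>\<^bsub>H\<^esub>, a}"
      unfolding tirreducible_Pfin1_iff by blast
    with A(2) X obtain B where B: "B \<in> set as" "a \<in> B"
      by auto
    with irr obtain b where "B = {\<one>\<^bsub>H\<^esub>, b}"
      unfolding tirreducible_Pfin1_iff by blast
    with a B show ?thesis
      by auto
  qed
  moreover have "set as \<subseteq> {A. tirreducible (Pfin1 H) A \<and> A \<subseteq> X}"
    using irr X by blast
  ultimately show ?thesis
    by blast
qed

lemma minimal_factorization_Pfin1_distinct:
  assumes min: "minimal_factorization (Pfin1 H) as X"
  shows "distinct as"
proof -
  have fact: "is_factorization (Pfin1 H) as X"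
    using min by (simp add: minimal_factorization_def)
  then have as: "set as \<subseteq> carrier (Pfin1 H)"
    using tirreducible_in_carrier_Pfin1 by (auto simp: is_factorization_def)
  \<comment> \<open>the product of a word depends only on its set of letters\<close>
  then have "is_factorization (Pfin1 H) (remdups as) X"
    using fact by (simp add: is_factorization_def word_prod_Pfin1)
  moreover have "word_le (Pfin1 H) (remdups as) as"
    using as by (simp add: word_le_Pfin1_iff mset_remdups_subset_eq)
  ultimately have "word_le (Pfin1 H) as (remdups as)"
    using min unfolding minimal_factorization_def by blast
  then have "mset as \<subseteq># mset (remdups as)"
    using as by (simp add: word_le_Pfin1_iff)
  then have "mset (remdups as) = mset as"
    by (rule subset_mset.antisym[OF mset_remdups_subset_eq])
  then have "length (remdups as) = length as"
    by (rule mset_eq_length)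
  then show "distinct as"
    by simp
qed

lemma factorization_Pfin1_exists:
  assumes "non_unit_divisor (Pfin1 H) X"
  shows "\<exists>as. is_factorization (Pfin1 H) as X"
proof -
  have X: "X \<subseteq> carrier H" "\<one>\<^bsub>H\<^esub> \<in> X" "finite X"
    using assms by (auto simp: non_unit_divisor_Pfin1_iff carrier_Pfin1)
  then obtain xs where xs: "set xs = X - {\<one>\<^bsub>H\<^esub>}"
    using finite_list by (meson finite_Diff)
  define as where "as = map (\<lambda>a. {\<one>\<^bsub>H\<^esub>, a}) xs"
  have irr: "\<forall>A\<in>set as. tirreducible (Pfin1 H) A"
    unfolding as_def tirreducible_Pfin1_iff using xs X by auto
  then have "word_prod (Pfin1 H) as = X"
    using xs X tirreducible_in_carrier_Pfin1
    by (subst word_prod_Pfin1) (auto simp: as_def)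
  with irr show ?thesis
    unfolding is_factorization_def by blast
qed

lemma minimal_factorizations_Pfin1_equiv:
  assumes as: "minimal_factorization (Pfin1 H) as X"
    and bs: "minimal_factorization (Pfin1 H) bs X"
  shows "word_equiv (Pfin1 H) as bs"
proof -
  have fact: "is_factorization (Pfin1 H) as X" "is_factorization (Pfin1 H) bs X"
    using as bs by (simp_all add: minimal_factorization_def)
  then have "set as = set bs"
    by (simp add: set_factorization_Pfin1)
  then have "mset as = mset bs"
    using minimal_factorization_Pfin1_distinct[OF as] minimal_factorization_Pfin1_distinct[OF bs]
    by (simp add: set_eq_iff_mset_eq_distinct)
  moreover have "set as \<subseteq> carrier (Pfin1 H)" "set bs \<subseteq> carrier (Pfin1 H)"
    using fact tirreducible_in_carrier_Pfin1 by (auto simp: is_factorization_def)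
  ultimately show ?thesis
    by (simp add: word_equiv_def word_le_Pfin1_iff)
qed

end

theorem proposition4p7:
  fixes H :: "('a, 'b) monoid_scheme"
  assumes "breakable H"
  shows "UmF (Pfin1 H)"
  unfolding UmF_def
  using factorization_Pfin1_exists[OF assms] minimal_factorizations_Pfin1_equiv[OF assms]
  by blast

end
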